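(* A quantum channel $\mathcal P$ on $S$ is activity breaking (i.e. $\mathcal P(\rho)\in\mathsf P(S)$ for every $\rho\in\mathsf{St}(S)$) if and only if there is a POVM $(P_j)_{j=1}^d$ (with $P_j\ge0$, $\sum_jP_j=I$) such that $\mathcal P(\rho)=\sum_{j=1}^d\mathrm{Tr}[P_j\rho]\,\tau_j$ for all $\rho$.
   Context: $S$ is a $d$-dimensional quantum system with non-degenerate Hamiltonian $H=\sum_i E_i|i\rangle\langle i|$, $E_1<\dots<E_d$. $\mathsf{St}(S)$ is the set of density matrices; $\mathsf P(S)$ is the set of passive states, i.e. states $\sum_i p_i|i\rangle\langle i|$ with $p_1\ge\dots\ge p_d$. For $j=1,\dots,d$, $\tau_j=\frac1j\sum_{i=1}^j|i\rangle\langle i|$. *)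

theory Defs
  imports Complex_Main
begin

text \<open>Operators on the d-dimensional system are represented as complex matrices
  nat => nat => complex supported on indices 0..<d, written in the
  energy eigenbasis: index a (0-based) corresponds to the eigenvector |a+1> with
  energy E_(a+1), so that E_1 < ... < E_d is the index order.\<close>

type_synonym cmat = "nat \<Rightarrow> nat \<Rightarrow> complex"

definition is_mat :: "nat \<Rightarrow> cmat \<Rightarrow> bool" where
  "is_mat d A \<longleftrightarrow> (\<forall>i j. (d \<le> i \<or> d \<le> j) \<longrightarrow> A i j = 0)"

definition mtrace :: "nat \<Rightarrow> cmat \<Rightarrow> complex" where
  "mtrace d A = (\<Sum>i<d. A i i)"

definition mmult :: "nat \<Rightarrow> cmat \<Rightarrow> cmat \<Rightarrow> cmat" where
  "mmult d A B = (\<lambda>i j. if i < d \<and> j < d then (\<Sum>k<d. A i k * B k j) else 0)"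

definition idm :: "nat \<Rightarrow> cmat" where
  "idm d = (\<lambda>i j. if i = j \<and> i < d then 1 else 0)"

definition psd :: "nat \<Rightarrow> cmat \<Rightarrow> bool" where
  "psd d A \<longleftrightarrow> is_mat d A \<and>
     (\<forall>v :: nat \<Rightarrow> complex. let q = (\<Sum>i<d. \<Sum>j<d. cnj (v i) * A i j * v j)
        in Im q = 0 \<and> Re q \<ge> 0)"

definition density :: "nat \<Rightarrow> cmat \<Rightarrow> bool" where
  "density d \<rho> \<longleftrightarrow> psd d \<rho> \<and> mtrace d \<rho> = 1"

definition passive_state :: "nat \<Rightarrow> cmat \<Rightarrow> bool" where
  "passive_state d \<rho> \<longleftrightarrow> density d \<rho> \<and>
     (\<exists>p :: nat \<Rightarrow> real. \<rho> = (\<lambda>i j. if i = j \<and> i < d then complex_of_real (p i) else 0)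
        \<and> (\<forall>i j. i \<le> j \<longrightarrow> j < d \<longrightarrow> p j \<le> p i))"

text \<open>tau_j = (1/j) sum_{i=1}^j |i><i|, for j = 1..d (basis |i> is index i-1).\<close>
definition tau :: "nat \<Rightarrow> cmat" where
  "tau j = (\<lambda>a b. if a = b \<and> a < j then 1 / of_nat j else 0)"

text \<open>Ampliation id_n \<otimes> Phi acting on an (n*d) x (n*d) block matrix with d x d blocks.\<close>
definition ampl :: "nat \<Rightarrow> nat \<Rightarrow> (cmat \<Rightarrow> cmat) \<Rightarrow> cmat \<Rightarrow> cmat" where
  "ampl n d \<Phi> X = (\<lambda>p q. if p < n * d \<and> q < n * d then
      \<Phi> (\<lambda>i j. if i < d \<and> j < d then X ((p div d) * d + i) ((q div d) * d + j) else 0)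
        (p mod d) (q mod d)
    else 0)"

definition channel :: "nat \<Rightarrow> (cmat \<Rightarrow> cmat) \<Rightarrow> bool" where
  "channel d \<Phi> \<longleftrightarrow>
     (\<forall>A. is_mat d A \<longrightarrow> is_mat d (\<Phi> A)) \<and>
     (\<forall>A B. is_mat d A \<longrightarrow> is_mat d B \<longrightarrow>
        \<Phi> (\<lambda>i j. A i j + B i j) = (\<lambda>i j. \<Phi> A i j + \<Phi> B i j)) \<and>
     (\<forall>c A. is_mat d A \<longrightarrow> \<Phi> (\<lambda>i j. c * A i j) = (\<lambda>i j. c * \<Phi> A i j)) \<and>
     (\<forall>A. is_mat d A \<longrightarrow> mtrace d (\<Phi> A) = mtrace d A) \<and>
     (\<forall>n X. psd (n * d) X \<longrightarrow> psd (n * d) (ampl n d \<Phi> X))"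

definition activity_breaking :: "nat \<Rightarrow> (cmat \<Rightarrow> cmat) \<Rightarrow> bool" where
  "activity_breaking d \<Phi> \<longleftrightarrow> (\<forall>\<rho>. density d \<rho> \<longrightarrow> passive_state d (\<Phi> \<rho>))"

definition povm :: "nat \<Rightarrow> (nat \<Rightarrow> cmat) \<Rightarrow> bool" where
  "povm d P \<longleftrightarrow> (\<forall>j\<in>{1..d}. psd d (P j)) \<and>
     (\<forall>a b. (\<Sum>j=1..d. P j a b) = idm d a b)"

end

theory Submission
  imports Defs "HOL-Library.Complex_Order"
begin

text \<open>If \<Phi> is activity breaking, every output \<Phi>(\<rho>) is diagonal with non-increasing entries
  p_1 \<ge> ... \<ge> p_d \<ge> 0, and such a diagonal matrix telescopes as \<Sum>_j j (p_j - p_{j+1}) \<tau>_j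
  (with p_{d+1} = 0). The coefficients are linear in \<rho>, hence of the form Tr[P_j \<rho>]; they are
  non-negative on states, so each P_j is positive semidefinite, and trace preservation makes
  \<Sum>_j P_j = I. Conversely, Tr[P_j \<rho>] \<ge> 0 for positive semidefinite P_j and \<rho>, so
  \<Sum>_j Tr[P_j \<rho>] \<tau>_j is diagonal with non-increasing entries, and it is a state because \<Phi>
  is a channel.

  Complex numbers carry the partial order of HOL-Library.Complex_Order, in which 0 \<le> z
  means that z is a non-negative real.\<close>

section \<open>Positive semidefinite matrices\<close>

definition quad_form :: "nat \<Rightarrow> cmat \<Rightarrow> (nat \<Rightarrow> complex) \<Rightarrow> complex" where
  "quad_form d A v = (\<Sum>i<d. \<Sum>j<d. cnj (v i) * A i j * v j)"

lemma psd_iff_quad_form_nonneg: "psd d A \<longleftrightarrow> is_mat d A \<and> (\<forall>v. 0 \<le> quad_form d A v)"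
  unfolding psd_def quad_form_def Let_def less_eq_complex_def by auto

lemma nonneg_complex_divide: "0 \<le> q \<Longrightarrow> 0 \<le> r \<Longrightarrow> 0 \<le> q / (r::complex)"
  by (simp add: less_eq_complex_def Re_divide Im_divide)

lemma is_mat_nonzero: "is_mat d A \<Longrightarrow> A i j \<noteq> 0 \<Longrightarrow> i < d \<and> j < d"
  unfolding is_mat_def by (meson not_less)

lemma if_zero_mult:
  "(if P then a else 0) * b = (if P then a * b else (0::'a::mult_zero))"
  "b * (if P then a else 0) = (if P then b * a else (0::'a::mult_zero))"
  by simp_all

lemma quad_form_add_unit:
  assumes "k < d"
  shows "quad_form d A (\<lambda>i. v i + (if i = k then t else 0)) =
    quad_form d A v + cnj t * (\<Sum>j<d. A k j * v j) + t * (\<Sum>i<d. cnj (v i) * A i k)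
      + cnj t * t * A k k"
proof -
  let ?e = "\<lambda>i. if i = k then t else 0"
  have pull_if: "(\<Sum>j<d. if P then f j else 0) = (if P then \<Sum>j<d. f j else 0)"
    for P and f :: "nat \<Rightarrow> complex" by simp
  have "quad_form d A (\<lambda>i. v i + ?e i) =
     (\<Sum>i<d. (\<Sum>j<d. cnj (v i) * A i j * v j) + (\<Sum>j<d. cnj (v i) * A i j * ?e j)
        + (\<Sum>j<d. cnj (?e i) * A i j * v j) + (\<Sum>j<d. cnj (?e i) * A i j * ?e j))"
    unfolding quad_form_def sum.distrib[symmetric]
    by (intro sum.cong refl) (simp add: algebra_simps)
  also have "\<dots> = quad_form d A v + (\<Sum>i<d. cnj (v i) * A i k * t)
      + cnj t * (\<Sum>j<d. A k j * v j) + cnj t * A k k * t"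
    using assms
    by (simp add: quad_form_def sum.distrib if_distrib[of cnj] if_zero_mult sum_distrib_left
        mult.assoc pull_if cong: if_cong)
  finally show ?thesis by (simp add: sum_distrib_left algebra_simps)
qed

lemma quad_form_unit:
  assumes "k < d" shows "quad_form d A (\<lambda>i. if i = k then t else 0) = cnj t * t * A k k"
  using quad_form_add_unit[OF assms, of A "\<lambda>_. 0" t] by (simp add: quad_form_def)

lemma quad_form_two_units:
  assumes "i < d" "j < d" "i \<noteq> j"
  shows "quad_form d A (\<lambda>l. (if l = j then t else 0) + (if l = i then s else 0)) =
     cnj t * t * A j j + cnj s * t * A i j + s * cnj t * A j i + cnj s * s * A i i"
  using quad_form_add_unit[OF assms(1), of A "\<lambda>l. if l = j then t else 0" s] assms
  by (simp add: quad_form_unit if_zero_mult if_distrib[of cnj] algebra_simps cong: if_cong)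

lemma psd_diag_nonneg:
  assumes "psd d A" and k: "k < d"
  shows "0 \<le> A k k"
proof -
  have "0 \<le> quad_form d A (\<lambda>i. if i = k then 1 else 0)"
    using assms(1) by (simp add: psd_iff_quad_form_nonneg)
  then show ?thesis by (simp add: quad_form_unit[OF k])
qed

lemma psd_hermitian:
  assumes "psd d A" "i < d" "j < d"
  shows "A j i = cnj (A i j)"
proof (cases "i = j")
  case True
  then show ?thesis
    using psd_diag_nonneg[OF assms(1,2)] by (simp add: less_eq_complex_def complex_eq_iff)
next
  case False
  have diag: "0 \<le> A i i" "0 \<le> A j j" using psd_diag_nonneg assms by auto
  have q: "0 \<le> quad_form d A (\<lambda>l. (if l = j then t else 0) + (if l = i then 1 else 0))" for t
    using assms(1) by (simp add: psd_iff_quad_form_nonneg)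
  have "Im (A i j) + Im (A j i) = 0" "Re (A i j) - Re (A j i) = 0"
    using diag q[of 1] q[of \<i>]
    by (simp_all add: quad_form_two_units[OF assms(2,3) False] less_eq_complex_def)
  then show ?thesis by (simp add: complex_eq_iff)
qed

lemma psd_zero_diag_row:
  assumes A: "psd d A" and zero: "A k k = 0"
  shows "A k b = 0"
proof (rule ccontr)
  assume nz: "A k b \<noteq> 0"
  then have kb: "k < d" "b < d" "k \<noteq> b"
    using A zero is_mat_nonzero[of d A k b] by (auto simp: psd_iff_quad_form_nonneg)
  define z where "z = A k b"
  define n where "n = (Re z)\<^sup>2 + (Im z)\<^sup>2"
  have "n > 0" using nz by (simp add: n_def z_def complex_eq_iff sum_power2_gt_zero_iff)
  \<comment> \<open>along e_b - r z e_k the form equals A b b - 2 r |z|^2, which is negative for large r\<close>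
  define r where "r = (Re (A b b) + 1) / (2 * n)"
  define s where "s = - complex_of_real r * z"
  let ?v = "\<lambda>l. (if l = b then 1 else 0) + (if l = k then s else 0)"
  have "A b k = cnj z" using psd_hermitian[OF A kb(1,2)] z_def by simp
  then have "Re (quad_form d A ?v) = Re (A b b) - 2 * r * n"
    unfolding quad_form_two_units[OF kb] using zero
    by (simp add: s_def z_def[symmetric] n_def power2_eq_square algebra_simps)
  also have "\<dots> = -1" using \<open>n > 0\<close> by (simp add: r_def field_simps)
  finally have "Re (quad_form d A ?v) = -1" .
  moreover have "0 \<le> Re (quad_form d A ?v)"
    using A by (simp add: psd_iff_quad_form_nonneg less_eq_complex_def)
  ultimately show False by simp
qed

lemma psd_schur_complement:
  assumes R: "psd d R" and k: "k < d" and r: "R k k \<noteq> 0"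
  shows "psd d (\<lambda>a b. R a b - R a k * R k b / R k k)"
  unfolding psd_iff_quad_form_nonneg
proof (intro conjI allI)
  show "is_mat d (\<lambda>a b. R a b - R a k * R k b / R k k)"
    using R by (simp add: psd_iff_quad_form_nonneg is_mat_def)
  have cr: "cnj (R k k) = R k k"
    using psd_hermitian[OF R k k] by simp
  fix v
  define \<alpha> where "\<alpha> = (\<Sum>j<d. R k j * v j)"
  define \<beta> where "\<beta> = (\<Sum>i<d. cnj (v i) * R i k)"
  have "quad_form d (\<lambda>a b. R a b - R a k * R k b / R k k) v
      = quad_form d R v - (\<Sum>i<d. \<Sum>j<d. (cnj (v i) * R i k) * (R k j * v j)) / R k k"
    unfolding quad_form_def by (simp add: sum_subtractf sum_divide_distrib algebra_simps)
  also have "\<dots> = quad_form d R v - \<beta> * \<alpha> / R k k"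
    unfolding \<alpha>_def \<beta>_def by (simp add: sum_product)
  also have "\<dots> = quad_form d R (\<lambda>i. v i + (if i = k then - \<alpha> / R k k else 0))"
    unfolding quad_form_add_unit[OF k] \<alpha>_def[symmetric] \<beta>_def[symmetric]
    using r cr by (simp add: field_simps)
  finally show "0 \<le> quad_form d (\<lambda>a b. R a b - R a k * R k b / R k k) v"
    using R by (simp add: psd_iff_quad_form_nonneg)
qed

lemma mtrace_mmult: "mtrace d (mmult d A B) = (\<Sum>a<d. \<Sum>b<d. A a b * B b a)"
  by (simp add: mtrace_def mmult_def)

lemma mtrace_mmult_schur_complement:
  assumes R: "psd d R" and k: "k < d"
  shows "mtrace d (mmult d P R) = mtrace d (mmult d P (\<lambda>a b. R a b - R a k * R k b / R k k))
    + quad_form d P (\<lambda>b. R b k) / R k k"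
proof -
  have herm: "R k a = cnj (R a k)" if "a < d" for a
    using psd_hermitian[OF R that k] .
  have "mtrace d (mmult d P R) = (\<Sum>a<d. \<Sum>b<d.
      P a b * (R b a - R b k * R k a / R k k) + cnj (R a k) * P a b * R b k / R k k)"
    unfolding mtrace_mmult by (intro sum.cong refl) (simp add: herm algebra_simps)
  then show ?thesis
    by (simp add: mtrace_mmult quad_form_def sum.distrib sum_divide_distrib)
qed

text \<open>Induction on the rows where R may be non-zero: a zero diagonal entry kills its row, and
  otherwise R is its Schur complement (with row k removed) plus the rank-one term
  R_k R_k^* / R k k, whose contribution to the trace is a value of the quadratic form of P.\<close>
lemma mtrace_mmult_psd_nonneg_on:
  assumes P: "psd d P" and "finite S"
  shows "psd d R \<Longrightarrow> (\<forall>a b. R a b \<noteq> 0 \<longrightarrow> a \<in> S) \<Longrightarrow> 0 \<le> mtrace d (mmult d P R)"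
  using \<open>finite S\<close>
proof (induction S arbitrary: R rule: finite_induct)
  case empty
  then show ?case by (simp add: mtrace_mmult)
next
  case (insert k S)
  show ?case
  proof (cases "R k k = 0")
    case True
    then have "\<forall>a b. R a b \<noteq> 0 \<longrightarrow> a \<in> S"
      using insert.prems psd_zero_diag_row[OF insert.prems(1)] by blast
    then show ?thesis using insert.IH insert.prems(1) by blast
  next
    case False
    then have k: "k < d"
      using insert.prems(1) is_mat_nonzero by (auto simp: psd_iff_quad_form_nonneg)
    define R' where "R' = (\<lambda>a b. R a b - R a k * R k b / R k k)"
    have "0 \<le> mtrace d (mmult d P R')"
    proof (rule insert.IH)
      show "psd d R'" unfolding R'_def by (rule psd_schur_complement[OF insert.prems(1) k False])
      show "\<forall>a b. R' a b \<noteq> 0 \<longrightarrow> a \<in> S"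
      proof (intro allI impI)
        fix a b assume nz: "R' a b \<noteq> 0"
        then have "R a b \<noteq> 0 \<or> R a k \<noteq> 0" by (auto simp: R'_def)
        then have "a \<in> insert k S" using insert.prems(2) by blast
        moreover have "R' k b = 0" using False by (simp add: R'_def)
        then have "a \<noteq> k" using nz by auto
        ultimately show "a \<in> S" by simp
      qed
    qed
    moreover have "0 \<le> quad_form d P (\<lambda>b. R b k) / R k k"
      using P psd_diag_nonneg[OF insert.prems(1) k]
      by (simp add: nonneg_complex_divide psd_iff_quad_form_nonneg)
    ultimately show ?thesis
      using mtrace_mmult_schur_complement[OF insert.prems(1) k, of P] by (simp add: R'_def)
  qed
qed

lemma mtrace_mmult_psd_nonneg: "psd d P \<Longrightarrow> psd d R \<Longrightarrow> 0 \<le> mtrace d (mmult d P R)"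
  using mtrace_mmult_psd_nonneg_on[of d P "{..<d}" R] is_mat_nonzero
  by (auto simp: psd_iff_quad_form_nonneg)

section \<open>Linearity of channels\<close>

lemma channel_add:
  "channel d \<Phi> \<Longrightarrow> is_mat d A \<Longrightarrow> is_mat d B \<Longrightarrow>
    \<Phi> (\<lambda>x y. A x y + B x y) = (\<lambda>x y. \<Phi> A x y + \<Phi> B x y)"
  by (simp add: channel_def)

lemma channel_scale:
  "channel d \<Phi> \<Longrightarrow> is_mat d A \<Longrightarrow> \<Phi> (\<lambda>x y. c * A x y) = (\<lambda>x y. c * \<Phi> A x y)"
  by (simp add: channel_def)

lemma channel_zero: "channel d \<Phi> \<Longrightarrow> \<Phi> (\<lambda>x y. 0) = (\<lambda>x y. 0)"
  using channel_scale[of d \<Phi> "\<lambda>x y. 0" 0] by (simp add: is_mat_def)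

lemma channel_lincomb:
  assumes c: "channel d \<Phi>" and "finite S" and M: "\<forall>i\<in>S. is_mat d (M i)"
  shows "\<Phi> (\<lambda>x y. \<Sum>i\<in>S. c i * M i x y) = (\<lambda>x y. \<Sum>i\<in>S. c i * \<Phi> (M i) x y)"
  using \<open>finite S\<close> M
proof (induction S rule: finite_induct)
  case empty
  then show ?case using channel_zero[OF c] by simp
next
  case (insert i S)
  have "is_mat d (\<lambda>x y. c i * M i x y)" "is_mat d (\<lambda>x y. \<Sum>i\<in>S. c i * M i x y)"
    using insert.prems by (auto simp: is_mat_def)
  then have "\<Phi> (\<lambda>x y. \<Sum>i\<in>insert i S. c i * M i x y)
      = (\<lambda>x y. \<Phi> (\<lambda>x y. c i * M i x y) x y + \<Phi> (\<lambda>x y. \<Sum>i\<in>S. c i * M i x y) x y)"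
    using channel_add[OF c] insert.hyps by simp
  then show ?case
    using insert channel_scale[OF c] by simp
qed

definition mat_unit :: "nat \<Rightarrow> nat \<Rightarrow> cmat" where
  "mat_unit a b = (\<lambda>x y. if x = a \<and> y = b then 1 else 0)"

lemma is_mat_mat_unit: "a < d \<Longrightarrow> b < d \<Longrightarrow> is_mat d (mat_unit a b)"
  by (auto simp: is_mat_def mat_unit_def)

lemma mat_eq_sum_mat_unit:
  assumes "is_mat d A"
  shows "A x y = (\<Sum>(a, b)\<in>{..<d}\<times>{..<d}. A a b * mat_unit a b x y)"
proof -
  have "(\<lambda>(a, b). A a b * mat_unit a b x y) = (\<lambda>p. if p = (x, y) then A x y else 0)"
    by (auto simp: mat_unit_def)
  then show ?thesis
    using assms by (simp add: is_mat_def not_less)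
qed

lemma channel_expand:
  assumes c: "channel d \<Phi>" and A: "is_mat d A"
  shows "\<Phi> A x y = (\<Sum>a<d. \<Sum>b<d. A a b * \<Phi> (mat_unit a b) x y)"
proof -
  let ?S = "{..<d}\<times>{..<d}"
  have "A = (\<lambda>x y. \<Sum>p\<in>?S. case_prod A p * case_prod mat_unit p x y)"
    by (intro ext, subst mat_eq_sum_mat_unit[OF A]) (simp add: split_def)
  then have "\<Phi> A = \<Phi> (\<lambda>x y. \<Sum>p\<in>?S. case_prod A p * case_prod mat_unit p x y)"
    by (rule arg_cong)
  also have "\<dots> = (\<lambda>x y. \<Sum>p\<in>?S. case_prod A p * \<Phi> (case_prod mat_unit p) x y)"
    using is_mat_mat_unit by (intro channel_lincomb[OF c]) auto
  finally show ?thesis by (simp add: sum.cartesian_product split_def)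
qed

lemma ampl_one:
  assumes c: "channel d \<Phi>" and X: "is_mat d X"
  shows "ampl 1 d \<Phi> X = \<Phi> X"
proof (intro ext)
  fix p q
  have X_restr: "(\<lambda>i j. if i < d \<and> j < d then X i j else 0) = X"
    using X by (intro ext) (auto simp: is_mat_def not_less)
  have "is_mat d (\<Phi> X)" using c X by (simp add: channel_def)
  then show "ampl 1 d \<Phi> X p q = \<Phi> X p q"
  proof (cases "p < d \<and> q < d")
    case True
    then have "p div d = 0" "q div d = 0" "p mod d = p" "q mod d = q" by simp_all
    with True show ?thesis
      unfolding ampl_def by (simp only: mult_1 mult_zero_left add_0_left X_restr simp_thms if_True)
  qed (auto simp: ampl_def is_mat_def)
qed

lemma channel_psd:
  assumes c: "channel d \<Phi>" and X: "psd d X"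
  shows "psd d (\<Phi> X)"
proof -
  have "psd (1 * d) X \<longrightarrow> psd (1 * d) (ampl 1 d \<Phi> X)"
    using c unfolding channel_def by blast
  then show ?thesis
    using X ampl_one[OF c] by (simp add: psd_iff_quad_form_nonneg)
qed

lemma channel_density: "channel d \<Phi> \<Longrightarrow> density d \<rho> \<Longrightarrow> density d (\<Phi> \<rho>)"
  using channel_psd[of d \<Phi> \<rho>] unfolding density_def channel_def psd_iff_quad_form_nonneg
  by auto

section \<open>Diagonal matrices as combinations of the passive states \<tau>_j\<close>

text \<open>Level j of the paper is index j - 1 here; for a d \<times> d matrix the entry M d d is 0.\<close>
definition tau_coeff :: "nat \<Rightarrow> cmat \<Rightarrow> complex" where
  "tau_coeff j M = of_nat j * (M (j - 1) (j - 1) - M j j)"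

lemma sum_telescope_above:
  "a < n \<Longrightarrow> (\<Sum>j=1..(n::nat). if a < j then D (j - 1) - D j else 0) = D a - (D n :: complex)"
proof (induction n)
  case (Suc n)
  then show ?case
    by (cases "a < n") (auto simp: sum.cl_ivl_Suc less_Suc_eq intro!: sum.neutral)
qed simp

lemma sum_tau_coeff_mult_tau:
  assumes "a < d"
  shows "(\<Sum>j=1..d. tau_coeff j M * tau j a a) = M a a - M d d"
proof -
  have "(\<Sum>j=1..d. tau_coeff j M * tau j a a)
      = (\<Sum>j=1..d. if a < j then M (j - 1) (j - 1) - M j j else 0)"
    by (rule sum.cong) (auto simp: tau_coeff_def tau_def)
  then show ?thesis
    using sum_telescope_above[OF assms, of "\<lambda>i. M i i"] by simp
qed

lemma diag_eq_sum_tau: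
  assumes "is_mat d M" and diag: "\<And>a b. a \<noteq> b \<Longrightarrow> M a b = 0"
  shows "M a b = (\<Sum>j=1..d. tau_coeff j M * tau j a b)"
proof (cases "a = b \<and> a < d")
  case True
  then show ?thesis
    using sum_tau_coeff_mult_tau[of a d M] assms(1) by (simp add: is_mat_def)
next
  case False
  then show ?thesis
    using assms by (auto simp: tau_def is_mat_def not_less intro!: sum.neutral)
qed

lemma sum_tau_coeff: "is_mat d M \<Longrightarrow> (\<Sum>j=1..d. tau_coeff j M) = mtrace d M"
proof -
  have "(\<Sum>j=1..n. tau_coeff j M) = (\<Sum>i<n. M i i) - of_nat n * M n n" for n
    by (induction n) (auto simp: tau_coeff_def algebra_simps)
  then show "is_mat d M \<Longrightarrow> ?thesis" by (simp add: mtrace_def is_mat_def)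
qed

lemma passive_state_tau_coeff_nonneg:
  assumes "passive_state d M" and j: "j \<in> {1..d}"
  shows "0 \<le> tau_coeff j M"
proof -
  obtain p where M: "M = (\<lambda>a b. if a = b \<and> a < d then complex_of_real (p a) else 0)"
    and mono: "\<And>a b. a \<le> b \<Longrightarrow> b < d \<Longrightarrow> p b \<le> p a"
    using assms(1) unfolding passive_state_def by blast
  have "0 \<le> M (d - 1) (d - 1)"
    using assms psd_diag_nonneg[of d M "d - 1"] by (auto simp: passive_state_def density_def)
  then have "0 \<le> p (d - 1)" using j by (simp add: M less_eq_complex_def)
  then show ?thesis
    using j mono[of "j - 1" j] by (cases "j < d") (auto simp: tau_coeff_def M less_eq_complex_def)
qed

section \<open>Activity-breaking channels\<close>

text \<open>P_j represents the linear functional \<rho> \<mapsto> tau_coeff j (\<Phi> \<rho>) through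
  Tr[P_j \<rho>] (lemma mtrace_mmult_coeff_povm).\<close>
definition coeff_povm :: "nat \<Rightarrow> (cmat \<Rightarrow> cmat) \<Rightarrow> nat \<Rightarrow> cmat" where
  "coeff_povm d \<Phi> j = (\<lambda>a b. if a < d \<and> b < d then tau_coeff j (\<Phi> (mat_unit b a)) else 0)"

lemma mtrace_mmult_coeff_povm:
  assumes "channel d \<Phi>" and "is_mat d A"
  shows "mtrace d (mmult d (coeff_povm d \<Phi> j) A) = tau_coeff j (\<Phi> A)"
proof -
  have "mtrace d (mmult d (coeff_povm d \<Phi> j) A)
      = (\<Sum>a<d. \<Sum>b<d. A b a * tau_coeff j (\<Phi> (mat_unit b a)))"
    by (simp add: mtrace_mmult coeff_povm_def mult.commute)
  also have "\<dots> = (\<Sum>b<d. \<Sum>a<d. A b a * tau_coeff j (\<Phi> (mat_unit b a)))"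
    by (rule sum.swap)
  also have "\<dots> = tau_coeff j (\<Phi> A)"
    by (simp add: tau_coeff_def channel_expand[OF assms]
        sum_subtractf[symmetric] sum_distrib_left algebra_simps)
  finally show ?thesis .
qed

lemma sum_coeff_povm:
  assumes c: "channel d \<Phi>"
  shows "(\<Sum>j=1..d. coeff_povm d \<Phi> j a b) = idm d a b"
proof (cases "a < d \<and> b < d")
  case True
  then have "is_mat d (mat_unit b a)" by (simp add: is_mat_mat_unit)
  then have image: "is_mat d (\<Phi> (mat_unit b a))" using c by (simp add: channel_def)
  have "(\<Sum>j=1..d. coeff_povm d \<Phi> j a b) = mtrace d (\<Phi> (mat_unit b a))"
    using sum_tau_coeff[OF image] True by (simp add: coeff_povm_def)
  also have "\<dots> = mtrace d (mat_unit b a)"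
    using \<open>is_mat d (mat_unit b a)\<close> c by (simp add: channel_def)
  also have "\<dots> = idm d a b"
    using True by (auto simp: mtrace_def mat_unit_def idm_def intro!: sum.neutral)
  finally show ?thesis .
qed (auto simp: coeff_povm_def idm_def)

definition outer :: "nat \<Rightarrow> (nat \<Rightarrow> complex) \<Rightarrow> cmat" where
  "outer d v = (\<lambda>x y. if x < d \<and> y < d then v x * cnj (v y) else 0)"

lemma psd_outer: "psd d (outer d v)"
  unfolding psd_iff_quad_form_nonneg
proof (intro conjI allI)
  show "is_mat d (outer d v)" by (simp add: is_mat_def outer_def)
  fix w
  define z where "z = (\<Sum>x<d. cnj (w x) * v x)"
  have "quad_form d (outer d v) w = (\<Sum>x<d. \<Sum>y<d. (cnj (w x) * v x) * cnj (cnj (w y) * v y))"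
    unfolding quad_form_def outer_def by (simp add: mult_ac)
  also have "\<dots> = z * cnj z"
    by (simp add: z_def sum_product)
  also have "\<dots> = of_real ((cmod z)\<^sup>2)"
    by (rule complex_norm_square[symmetric])
  finally show "0 \<le> quad_form d (outer d v) w" by (simp add: less_eq_complex_def)
qed

lemma quad_form_eq_mtrace_outer: "quad_form d A v = mtrace d (mmult d A (outer d v))"
  by (simp add: quad_form_def mtrace_mmult outer_def mult_ac)

lemma activity_breaking_tau_coeff_nonneg:
  assumes c: "channel d \<Phi>" and ab: "activity_breaking d \<Phi>" and A: "psd d A"
    and j: "j \<in> {1..d}"
  shows "0 \<le> tau_coeff j (\<Phi> A)"
proof -
  have A_mat: "is_mat d A" using A by (simp add: psd_iff_quad_form_nonneg)
  define t where "t = mtrace d A"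
  have diag: "\<forall>i\<in>{..<d}. 0 \<le> A i i" using psd_diag_nonneg[OF A] by simp
  then have "0 \<le> t" unfolding t_def mtrace_def by (intro sum_nonneg) auto
  show ?thesis
  proof (cases "t = 0")
    case True
    then have "\<forall>i\<in>{..<d}. A i i = 0"
      using sum_nonneg_eq_0_iff[of "{..<d}" "\<lambda>i. A i i"] diag by (simp add: t_def mtrace_def)
    then have "A = (\<lambda>x y. 0)"
      using psd_zero_diag_row[OF A] is_mat_nonzero[OF A_mat] by blast
    then show ?thesis using channel_zero[OF c] by (simp add: tau_coeff_def)
  next
    case False
    define R where "R = (\<lambda>x y. A x y / t)"
    have "density d R"
      using A A_mat False \<open>0 \<le> t\<close>
      by (auto simp: density_def psd_iff_quad_form_nonneg is_mat_def R_def quad_form_def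
          mtrace_def t_def nonneg_complex_divide sum_divide_distrib[symmetric])
    then have "0 \<le> tau_coeff j (\<Phi> R)"
      using ab j passive_state_tau_coeff_nonneg by (auto simp: activity_breaking_def)
    moreover have "A = (\<lambda>x y. t * R x y)" using False by (simp add: R_def)
    then have "\<Phi> A = (\<lambda>x y. t * \<Phi> R x y)"
      using channel_scale[OF c, of R t] A_mat by (simp add: R_def is_mat_def)
    then have "tau_coeff j (\<Phi> A) = t * tau_coeff j (\<Phi> R)"
      by (simp add: tau_coeff_def algebra_simps)
    ultimately show ?thesis using \<open>0 \<le> t\<close> by simp
  qed
qed

lemma psd_coeff_povm:
  assumes c: "channel d \<Phi>" and ab: "activity_breaking d \<Phi>" and j: "j \<in> {1..d}"
  shows "psd d (coeff_povm d \<Phi> j)"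
  unfolding psd_iff_quad_form_nonneg
proof (intro conjI allI)
  show "is_mat d (coeff_povm d \<Phi> j)" by (simp add: is_mat_def coeff_povm_def)
  fix v
  have "quad_form d (coeff_povm d \<Phi> j) v = tau_coeff j (\<Phi> (outer d v))"
    unfolding quad_form_eq_mtrace_outer
    by (rule mtrace_mmult_coeff_povm[OF c]) (simp add: is_mat_def outer_def)
  then show "0 \<le> quad_form d (coeff_povm d \<Phi> j) v"
    using activity_breaking_tau_coeff_nonneg[OF c ab psd_outer j] by simp
qed

lemma passive_state_sum_tau:
  assumes "density d M" and M: "M = (\<lambda>a b. \<Sum>j=1..d. c j * tau j a b)"
    and c: "\<And>j. j \<in> {1..d} \<Longrightarrow> 0 \<le> c j"
  shows "passive_state d M"
proof -
  define p where "p a = (\<Sum>j=1..d. if a < j then Re (c j) / real j else 0)" for a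
  have "M = (\<lambda>a b. if a = b \<and> a < d then complex_of_real (p a) else 0)"
  proof (intro ext)
    fix a b
    have "M a b = (\<Sum>j=1..d. if a = b \<and> a < j then complex_of_real (Re (c j) / real j) else 0)"
      unfolding M using c by (intro sum.cong) (auto simp: tau_def less_eq_complex_def complex_eq_iff)
    then show "M a b = (if a = b \<and> a < d then complex_of_real (p a) else 0)"
      by (auto simp: p_def of_real_sum intro!: sum.cong sum.neutral)
  qed
  moreover have "p b \<le> p a" if "a \<le> b" for a b
    unfolding p_def using c that
    by (intro sum_mono) (auto simp: less_eq_complex_def)
  ultimately show ?thesis
    using assms(1) unfolding passive_state_def by blast
qed

lemma povm_coeff_povm:
  "channel d \<Phi> \<Longrightarrow> activity_breaking d \<Phi> \<Longrightarrow> povm d (coeff_povm d \<Phi>)"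
  unfolding povm_def using psd_coeff_povm sum_coeff_povm by blast

lemma activity_breaking_eq_sum_tau:
  assumes c: "channel d \<Phi>" and ab: "activity_breaking d \<Phi>" and \<rho>: "density d \<rho>"
  shows "\<Phi> \<rho> = (\<lambda>a b. \<Sum>j=1..d. mtrace d (mmult d (coeff_povm d \<Phi> j) \<rho>) * tau j a b)"
proof -
  have "passive_state d (\<Phi> \<rho>)" using ab \<rho> by (simp add: activity_breaking_def)
  then have "is_mat d (\<Phi> \<rho>)" "\<And>a b. a \<noteq> b \<Longrightarrow> \<Phi> \<rho> a b = 0"
    by (auto simp: passive_state_def density_def psd_iff_quad_form_nonneg)
  moreover have "is_mat d \<rho>" using \<rho> by (simp add: density_def psd_iff_quad_form_nonneg)
  ultimately show ?thesis
    using diag_eq_sum_tau by (simp add: mtrace_mmult_coeff_povm[OF c])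
qed

lemma activity_breaking_if_eq_sum_tau:
  assumes c: "channel d \<Phi>" and P: "povm d P"
    and expansion: "\<And>\<rho>. density d \<rho> \<Longrightarrow>
      \<Phi> \<rho> = (\<lambda>a b. \<Sum>j=1..d. mtrace d (mmult d (P j) \<rho>) * tau j a b)"
  shows "activity_breaking d \<Phi>"
  unfolding activity_breaking_def
proof (intro allI impI)
  fix \<rho> assume \<rho>: "density d \<rho>"
  show "passive_state d (\<Phi> \<rho>)"
  proof (rule passive_state_sum_tau[OF channel_density[OF c \<rho>] expansion[OF \<rho>]])
    show "0 \<le> mtrace d (mmult d (P j) \<rho>)" if "j \<in> {1..d}" for j
      using P \<rho> that mtrace_mmult_psd_nonneg by (simp add: povm_def density_def)
  qed
qed

theorem mainTheorem5:
  fixes d :: nat and \<Phi> :: "cmat \<Rightarrow> cmat"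
  assumes "d \<ge> 1" and "channel d \<Phi>"
  shows "activity_breaking d \<Phi> \<longleftrightarrow>
    (\<exists>P. povm d P \<and>
       (\<forall>\<rho>. density d \<rho> \<longrightarrow>
          \<Phi> \<rho> = (\<lambda>a b. \<Sum>j=1..d. mtrace d (mmult d (P j) \<rho>) * tau j a b)))"
proof
  assume "activity_breaking d \<Phi>"
  then show "\<exists>P. povm d P \<and> (\<forall>\<rho>. density d \<rho> \<longrightarrow>
      \<Phi> \<rho> = (\<lambda>a b. \<Sum>j=1..d. mtrace d (mmult d (P j) \<rho>) * tau j a b))"
    using povm_coeff_povm activity_breaking_eq_sum_tau assms(2) by blast
next
  assume "\<exists>P. povm d P \<and> (\<forall>\<rho>. density d \<rho> \<longrightarrow>
      \<Phi> \<rho> = (\<lambda>a b. \<Sum>j=1..d. mtrace d (mmult d (P j) \<rho>) * tau j a b))"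
  then show "activity_breaking d \<Phi>"
    using activity_breaking_if_eq_sum_tau[OF assms(2)] by blast
qed

end
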